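(* Let $f(z)=z+\sum_{n=2}^{\infty}a_nz^n$ belong to $\mathcal{S}^*_{\xi}$. Then the second Hankel determinant $H_{2,2}(f)=a_2a_4-a_3^2$ satisfies $|H_{2,2}(f)|\le \frac14$. The estimate is sharp: equality holds for some function in $\mathcal{S}^*_{\xi}$.
   Context: $\mathbb{D}=\{z\in\mathbb{C}:|z|<1\}$. $\mathcal{A}$ is the class of analytic functions $f$ on $\mathbb{D}$ of the form $f(z)=z+\sum_{n\ge2}a_nz^n$. For analytic $f,g$ on $\mathbb{D}$, $f\prec g$ means there is an analytic $w:\mathbb{D}\to\mathbb{D}$ with $w(0)=0$ and $f=g\circ w$. Let $\xi(z)=1+\frac{\sin z}{1-z}$ for $z\in\mathbb{D}$, and $\mathcal{S}^*_{\xi}=\{f\in\mathcal{A}: \frac{zf'(z)}{f(z)}\prec \xi(z)\}$. *)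

theory Defs
  imports "HOL-Complex_Analysis.Complex_Analysis"
begin

definition unit_disc :: "complex set" where
  "unit_disc = ball 0 1"

definition classA :: "(complex \<Rightarrow> complex) \<Rightarrow> bool" where
  "classA f \<longleftrightarrow> f holomorphic_on unit_disc \<and> f 0 = 0 \<and> deriv f 0 = 1"

definition coeff :: "(complex \<Rightarrow> complex) \<Rightarrow> nat \<Rightarrow> complex" where
  "coeff f n = (deriv ^^ n) f 0 / fact n"

definition subordinate :: "(complex \<Rightarrow> complex) \<Rightarrow> (complex \<Rightarrow> complex) \<Rightarrow> bool" where
  "subordinate f g \<longleftrightarrow> (\<exists>w. w holomorphic_on unit_disc \<and> w ` unit_disc \<subseteq> unit_disc \<and> w 0 = 0
      \<and> (\<forall>z\<in>unit_disc. f z = g (w z)))"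

definition xi :: "complex \<Rightarrow> complex" where
  "xi z = 1 + sin z / (1 - z)"

text \<open>The function z f'(z)/f(z), extended at the origin by its limit value 1
  (f'(0) = 1 for f in class A).\<close>
definition zf'_over_f :: "(complex \<Rightarrow> complex) \<Rightarrow> complex \<Rightarrow> complex" where
  "zf'_over_f f z = (if z = 0 then 1 else z * deriv f z / f z)"

text \<open>The class S*_xi. We require f z \<noteq> 0 for z \<noteq> 0 so that the quotient is defined.\<close>
definition S_xi :: "(complex \<Rightarrow> complex) set" where
  "S_xi = {f. classA f \<and> (\<forall>z\<in>unit_disc - {0}. f z \<noteq> 0) \<and> subordinate (zf'_over_f f) xi}"

end

theory Submission
  imports Defs
begin

(* Let w(z) = c1 z + c2 z^2 + c3 z^3 + ... be the Schwarz function with z f'/f = xi o w.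
   Since xi(z) = 1 + z + z^2 + 5/6 z^3 + ..., comparing coefficients in z f' = f (xi o w) gives
     a2 a4 - a3^2 = c1 c3/3 + c1^2 c2/6 - c1^4/18 - c2^2/4.
   One step of Schur's algorithm (w = z h, and (h - c1)/(1 - conj c1 h) is again a Schwarz
   function) yields |c2| <= 1 - |c1|^2 and |c3| <= 1 - |c1|^2 - |c2|^2/(1 + |c1|).  With
   r = |c1| and s = |c2| the triangle inequality bounds |a2 a4 - a3^2| by a quadratic in s that
   is convex on [0, 1 - r^2] and at most 1/4 at both endpoints.  Equality holds for w(z) = z^2. *)

subsection \<open>Coefficient bounds for Schwarz functions\<close>

definition schwarz_function :: "(complex \<Rightarrow> complex) \<Rightarrow> bool" where
  "schwarz_function w \<longleftrightarrow> w holomorphic_on unit_disc \<and> w ` unit_disc \<subseteq> unit_disc \<and> w 0 = 0"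

lemma subordinate_iff_schwarz_function:
  "subordinate f g \<longleftrightarrow> (\<exists>w. schwarz_function w \<and> (\<forall>z\<in>unit_disc. f z = g (w z)))"
  by (auto simp: subordinate_def schwarz_function_def)

lemma schwarz_functionD:
  assumes "schwarz_function w"
  shows "w holomorphic_on ball 0 1" "w 0 = 0" "\<And>z. norm z < 1 \<Longrightarrow> norm (w z) < 1"
  using assms by (auto simp: schwarz_function_def unit_disc_def image_subset_iff)

lemma coeff_eq_fps_nth: "f has_fps_expansion F \<Longrightarrow> coeff f n = fps_nth F n"
  by (simp add: fps_nth_fps_expansion coeff_def)

lemma coeff_1: "coeff f 1 = deriv f 0"
  by (simp add: coeff_def)

lemma holomorphic_on_unit_disc_has_fps_expansion:
  "f holomorphic_on unit_disc \<Longrightarrow> f has_fps_expansion fps_expansion f 0"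
  unfolding unit_disc_def by (rule has_fps_expansion_fps_expansion[of "ball 0 1"]) auto

lemma has_fps_expansion_cong_unit_disc:
  assumes "f has_fps_expansion F" "\<And>z. z \<in> unit_disc \<Longrightarrow> f z = g z"
  shows "g has_fps_expansion F"
proof -
  have "eventually (\<lambda>z. z \<in> unit_disc) (nhds 0)"
    unfolding unit_disc_def by (intro eventually_nhds_in_open) auto
  then have "eventually (\<lambda>z. f z = g z) (nhds 0)"
    by (rule eventually_mono) (use assms(2) in auto)
  with assms(1) show ?thesis
    using has_fps_expansion_cong by blast
qed

lemma schwarz_function_coeff1_le: "schwarz_function w \<Longrightarrow> norm (coeff w 1) \<le> 1"
  unfolding coeff_1 using Schwarz_Lemma(2)[of w 0] schwarz_functionD by auto

lemma coeff_linear_on_unit_disc: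
  assumes "\<And>z. z \<in> unit_disc \<Longrightarrow> w z = \<alpha> * z"
  shows "coeff w n = (if n = 1 then \<alpha> else 0)"
proof -
  have "(\<lambda>z. \<alpha> * z) has_fps_expansion fps_const \<alpha> * fps_X"
    by (intro fps_expansion_intros)
  then have "w has_fps_expansion fps_const \<alpha> * fps_X"
    by (rule has_fps_expansion_cong_unit_disc) (use assms in auto)
  then show ?thesis
    by (simp add: coeff_eq_fps_nth)
qed

lemma schwarz_function_rotation:
  assumes "schwarz_function w" "norm (coeff w 1) = 1"
  obtains \<alpha> where "\<And>z. z \<in> unit_disc \<Longrightarrow> w z = \<alpha> * z" "norm \<alpha> = 1"
  using Schwarz_Lemma(3)[of w 0] assms(2) schwarz_functionD[OF assms(1)] that
  unfolding coeff_1 unit_disc_def by auto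

lemma schwarz_function_coeff_eq_0_if_rotation:
  assumes "schwarz_function w" "norm (coeff w 1) = 1" "n \<noteq> 1"
  shows "coeff w n = 0"
  using schwarz_function_rotation[OF assms(1,2)] coeff_linear_on_unit_disc assms(3) by metis

lemma schwarz_function_factor:
  assumes w: "schwarz_function w" and a: "norm (coeff w 1) < 1"
  obtains h where "h holomorphic_on unit_disc" "h ` unit_disc \<subseteq> unit_disc" "h 0 = coeff w 1"
    "\<And>z. z \<in> unit_disc \<Longrightarrow> w z = z * h z"
proof -
  note wD = schwarz_functionD[OF w]
  obtain h where h: "h holomorphic_on ball 0 1" and wh: "\<And>z. norm z < 1 \<Longrightarrow> w z = z * h z"
    and h0: "deriv w 0 = h 0"
    using Schwarz3[OF wD(1,2)] by blast
  have "norm (h z) < 1" if z: "norm z < 1" for z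
  proof (cases "z = 0")
    case True
    then show ?thesis using h0 a unfolding coeff_1 by simp
  next
    case False
    show ?thesis
    proof (rule ccontr)
      assume "\<not> norm (h z) < 1"
      then have "norm z \<le> norm (w z)"
        using wh[OF z] by (simp add: norm_mult mult_le_cancel_left1)
      then have "norm (w z) = norm z"
        using Schwarz_Lemma(1)[OF wD z] by simp
      then obtain \<alpha> where "\<And>z. z \<in> unit_disc \<Longrightarrow> w z = \<alpha> * z" "norm \<alpha> = 1"
        using Schwarz_Lemma(3)[OF wD z] z False by (auto simp: unit_disc_def)
      then show False
        using a coeff_linear_on_unit_disc[of w \<alpha> 1] by simp
    qed
  qed
  then show ?thesis
    using that[unfolded coeff_1] h wh h0 by (auto simp: unit_disc_def image_subset_iff)
qed

lemma schwarz_function_Moebius: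
  assumes "h holomorphic_on unit_disc" "h ` unit_disc \<subseteq> unit_disc"
  shows "schwarz_function (\<lambda>z. Moebius_function 0 (h 0) (h z))"
proof -
  have h: "norm (h z) < 1" if "z \<in> unit_disc" for z
    using assms(2) that by (auto simp: unit_disc_def image_subset_iff)
  then have "norm (h 0) < 1"
    by (simp add: unit_disc_def)
  then have "(\<lambda>z. Moebius_function 0 (h 0) (h z)) holomorphic_on unit_disc"
    using holomorphic_on_compose_gen[OF assms(1) Moebius_function_holomorphic] assms(2)
    by (auto simp: o_def unit_disc_def)
  with h \<open>norm (h 0) < 1\<close> show ?thesis
    by (auto simp: schwarz_function_def Moebius_function_eq_zero Moebius_function_norm_lt_1 unit_disc_def)
qed

lemma fps_coeffs_of_Moebius_eq:
  fixes P H :: "complex fps"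
  assumes "P * (1 - fps_const (cnj a) * H) = H - fps_const a" "fps_nth H 0 = a" "fps_nth P 0 = 0"
  shows "fps_nth H 1 = (1 - cnj a * a) * fps_nth P 1"
    "fps_nth H 2 = (1 - cnj a * a) * (fps_nth P 2 - cnj a * (fps_nth P 1)^2)"
proof -
  have "fps_nth (P * (1 - fps_const (cnj a) * H)) n = fps_nth (H - fps_const a) n" for n
    using assms(1) by simp
  from this[of 1] this[of 2] assms(2,3)
  have H1: "fps_nth H 1 = (1 - cnj a * a) * fps_nth P 1"
    and H2: "fps_nth H 2 = (1 - cnj a * a) * fps_nth P 2 - cnj a * fps_nth P 1 * fps_nth H 1"
    by (simp_all add: fps_mult_nth numeral_2_eq_2 algebra_simps)
  then show "fps_nth H 1 = (1 - cnj a * a) * fps_nth P 1"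
    by simp
  show "fps_nth H 2 = (1 - cnj a * a) * (fps_nth P 2 - cnj a * (fps_nth P 1)^2)"
    unfolding H2 H1 by (simp add: power2_eq_square algebra_simps)
qed

lemma schwarz_function_schur_step:
  assumes w: "schwarz_function w" and a: "norm (coeff w 1) < 1"
  obtains \<psi> where "schwarz_function \<psi>"
    "coeff w 2 = of_real (1 - norm (coeff w 1)^2) * coeff \<psi> 1"
    "coeff w 3 = of_real (1 - norm (coeff w 1)^2)
       * (coeff \<psi> 2 - cnj (coeff w 1) * (coeff \<psi> 1)^2)"
proof -
  define a where "a = coeff w 1"
  obtain h where h: "h holomorphic_on unit_disc" "h ` unit_disc \<subseteq> unit_disc"
    and h0: "h 0 = a" and wh: "\<And>z. z \<in> unit_disc \<Longrightarrow> w z = z * h z"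
    using schwarz_function_factor[OF w a] unfolding a_def by metis
  define \<psi> where "\<psi> = (\<lambda>z. Moebius_function 0 a (h z))"
  have \<psi>: "schwarz_function \<psi>"
    using schwarz_function_Moebius[OF h] by (simp add: \<psi>_def h0)
  define H where "H = fps_expansion h 0"
  define P where "P = fps_expansion \<psi> 0"
  have hH: "h has_fps_expansion H" and \<psi>P: "\<psi> has_fps_expansion P"
    using holomorphic_on_unit_disc_has_fps_expansion h \<psi>
    by (auto simp: H_def P_def schwarz_function_def)
  have "(\<lambda>z. z * h z) has_fps_expansion fps_X * H"
    by (intro fps_expansion_intros hH)
  then have "w has_fps_expansion fps_X * H"
    by (rule has_fps_expansion_cong_unit_disc) (simp add: wh)
  then have w23: "coeff w 2 = fps_nth H 1" "coeff w 3 = fps_nth H 2"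
    by (simp_all add: coeff_eq_fps_nth numeral_2_eq_2 numeral_3_eq_3)
  have denom_nz: "cnj a * h z \<noteq> 1" if "z \<in> unit_disc" for z
  proof -
    have "norm (h z) < 1"
      using h(2) that by (auto simp: unit_disc_def image_subset_iff)
    then have "norm (cnj a * h z) < 1"
      using a norm_mult_less[of "cnj a" 1 "h z" 1] by (simp add: a_def)
    then show ?thesis
      by auto
  qed
  have "(\<lambda>z. h z - a) has_fps_expansion H - fps_const a"
    by (intro fps_expansion_intros hH)
  then have "(\<lambda>z. \<psi> z * (1 - cnj a * h z)) has_fps_expansion H - fps_const a"
    by (rule has_fps_expansion_cong_unit_disc) (simp add: denom_nz \<psi>_def Moebius_function_simple)
  moreover have "(\<lambda>z. \<psi> z * (1 - cnj a * h z)) has_fps_expansion P * (1 - fps_const (cnj a) * H)"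
    by (intro fps_expansion_intros hH \<psi>P)
  ultimately have "P * (1 - fps_const (cnj a) * H) = H - fps_const a"
    by (rule fps_expansion_unique_complex[rotated])
  moreover have "fps_nth H 0 = a" "fps_nth P 0 = 0"
    using coeff_eq_fps_nth[OF hH, of 0] coeff_eq_fps_nth[OF \<psi>P, of 0] h0 \<psi>
    by (simp_all add: coeff_def schwarz_function_def)
  moreover have "1 - cnj a * a = of_real (1 - norm a^2)"
    using complex_norm_square[of a] by (simp add: mult.commute)
  ultimately show ?thesis
    using that[OF \<psi>] fps_coeffs_of_Moebius_eq[of P a H] w23 coeff_eq_fps_nth[OF \<psi>P]
    by (simp only: a_def)
qed

lemma schwarz_function_coeff2_le:
  assumes w: "schwarz_function w"
  shows "norm (coeff w 2) \<le> 1 - norm (coeff w 1)^2"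
proof (cases "norm (coeff w 1) = 1")
  case True
  then show ?thesis
    using schwarz_function_coeff_eq_0_if_rotation[OF w True, of 2] by simp
next
  case False
  define d where "d = 1 - norm (coeff w 1)^2"
  have "norm (coeff w 1) < 1"
    using False schwarz_function_coeff1_le[OF w] by simp
  then have d: "0 < d"
    by (simp add: d_def power_less_one_iff abs_square_less_1)
  obtain \<psi> where \<psi>: "schwarz_function \<psi>" and c2: "coeff w 2 = of_real d * coeff \<psi> 1"
    using schwarz_function_schur_step[OF w] \<open>norm (coeff w 1) < 1\<close> by (auto simp: d_def)
  have "norm (coeff w 2) = d * norm (coeff \<psi> 1)"
    using d by (simp add: c2 norm_mult)
  also have "\<dots> \<le> d"
    using d schwarz_function_coeff1_le[OF \<psi>] by (simp add: mult_left_le)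
  finally show ?thesis
    by (simp add: d_def)
qed

lemma schwarz_function_coeff3_le:
  assumes w: "schwarz_function w"
  shows "norm (coeff w 3) \<le> 1 - norm (coeff w 1)^2 - norm (coeff w 2)^2 / (1 + norm (coeff w 1))"
proof (cases "norm (coeff w 1) = 1")
  case True
  then show ?thesis
    using schwarz_function_coeff_eq_0_if_rotation[OF w True] by simp
next
  case False
  define r where "r = norm (coeff w 1)"
  define d where "d = 1 - r^2"
  have r: "0 \<le> r" "r < 1"
    using False schwarz_function_coeff1_le[OF w] by (auto simp: r_def)
  then have d: "0 < d"
    by (simp add: d_def power_less_one_iff abs_square_less_1)
  obtain \<psi> where \<psi>: "schwarz_function \<psi>"
    and c2: "coeff w 2 = of_real d * coeff \<psi> 1"
    and c3: "coeff w 3 = of_real d * (coeff \<psi> 2 - cnj (coeff w 1) * (coeff \<psi> 1)^2)"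
    using schwarz_function_schur_step[OF w] r by (auto simp: r_def d_def)
  define t where "t = norm (coeff \<psi> 1)"
  have s: "norm (coeff w 2) = d * t"
    using d by (simp add: c2 norm_mult t_def)
  have "norm (coeff w 3) = d * norm (coeff \<psi> 2 - cnj (coeff w 1) * (coeff \<psi> 1)^2)"
    using d by (simp add: c3 norm_mult)
  also have "\<dots> \<le> d * (norm (coeff \<psi> 2) + r * t^2)"
    using d norm_triangle_ineq4[of "coeff \<psi> 2" "cnj (coeff w 1) * (coeff \<psi> 1)^2"]
    by (simp add: norm_mult norm_power r_def t_def)
  also have "\<dots> \<le> d * (1 - t^2 + r * t^2)"
    using d schwarz_function_coeff2_le[OF \<psi>] by (simp add: t_def)
  also have "\<dots> = d - (d * t)^2 / (1 + r)"
    using r by (simp add: d_def field_simps power2_eq_square)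
  finally show ?thesis
    by (simp add: s r_def d_def)
qed

subsection \<open>The Hankel determinant in terms of the Schwarz function\<close>

definition fps_xi :: "complex fps" where
  "fps_xi = 1 + fps_sin 1 * Abs_fps (\<lambda>_. 1)"

lemma xi_has_fps_expansion: "xi has_fps_expansion fps_xi"
proof -
  have "inverse (1 - fps_X) = Abs_fps (\<lambda>_. 1 :: complex)"
    using fps_inverse_gp'[where ?'a = complex] fps_inverse_idempotent[of "Abs_fps (\<lambda>_. 1::complex)"]
    by simp
  moreover have "(\<lambda>z. 1 + sin z * inverse (1 - z)) has_fps_expansion
      1 + fps_sin 1 * inverse (1 - fps_X :: complex fps)"
    by (intro fps_expansion_intros) auto
  moreover have "(\<lambda>z. 1 + sin z * inverse (1 - z)) = xi"
    by (auto simp: xi_def fun_eq_iff field_simps)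
  ultimately show ?thesis
    by (simp add: fps_xi_def)
qed

lemma fps_xi_nth:
  "fps_nth fps_xi 0 = 1" "fps_nth fps_xi 1 = 1" "fps_nth fps_xi 2 = 1" "fps_nth fps_xi 3 = 5/6"
  by (simp_all add: fps_xi_def fps_mult_nth fps_sin_def numeral_3_eq_3 numeral_2_eq_2 fact_numeral)
    presburger

lemma fps_compose_nth_1_2_3:
  fixes A W :: "'a :: comm_ring_1 fps"
  assumes "fps_nth W 0 = 0"
  shows "fps_nth (fps_compose A W) 1 = fps_nth A 1 * fps_nth W 1"
    "fps_nth (fps_compose A W) 2 = fps_nth A 1 * fps_nth W 2 + fps_nth A 2 * (fps_nth W 1)^2"
    "fps_nth (fps_compose A W) 3 = fps_nth A 1 * fps_nth W 3
       + 2 * fps_nth A 2 * fps_nth W 1 * fps_nth W 2 + fps_nth A 3 * (fps_nth W 1)^3"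
  using assms
  by (simp_all add: fps_compose_nth fps_mult_nth numeral_3_eq_3 numeral_2_eq_2 power2_eq_square
      power3_eq_cube algebra_simps)

lemma fps_coeffs_of_X_deriv_eq_mult:
  fixes F P :: "'a :: field_char_0 fps"
  assumes E: "fps_X * fps_deriv F = F * P"
    and "fps_nth F 0 = 0" "fps_nth F 1 = 1" "fps_nth P 0 = 1"
  shows "fps_nth F 2 = fps_nth P 1"
    "fps_nth F 3 = ((fps_nth P 1)^2 + fps_nth P 2) / 2"
    "fps_nth F 4 = ((fps_nth P 1)^3 + 3 * fps_nth P 1 * fps_nth P 2 + 2 * fps_nth P 3) / 6"
proof -
  have n: "of_nat n * fps_nth F n = fps_nth (F * P) n" if "n > 0" for n
    using arg_cong[OF E, of "\<lambda>G. fps_nth G n"] that by (cases n) simp_all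
  have "2 * fps_nth F 2 = fps_nth F 2 + fps_nth P 1"
    using n[of 2] assms(2-4) by (simp add: fps_mult_nth numeral_2_eq_2)
  then show F2: "fps_nth F 2 = fps_nth P 1"
    by simp
  have "3 * fps_nth F 3 = fps_nth F 3 + fps_nth F 2 * fps_nth P 1 + fps_nth P 2"
    using n[of 3] assms(2-4) by (simp add: fps_mult_nth numeral_3_eq_3 numeral_2_eq_2 algebra_simps)
  then show F3: "fps_nth F 3 = ((fps_nth P 1)^2 + fps_nth P 2) / 2"
    unfolding F2 by (simp add: field_simps power2_eq_square)
  have "4 * fps_nth F 4
      = fps_nth F 4 + fps_nth F 3 * fps_nth P 1 + fps_nth F 2 * fps_nth P 2 + fps_nth P 3"
    using n[of 4] assms(2-4) by (simp add: fps_mult_nth eval_nat_numeral algebra_simps)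
  then show "fps_nth F 4 = ((fps_nth P 1)^3 + 3 * fps_nth P 1 * fps_nth P 2 + 2 * fps_nth P 3) / 6"
    unfolding F2 F3 by (simp add: field_simps power2_eq_square power3_eq_cube)
qed

lemma zf'_over_f_fps_equation:
  assumes f: "classA f" "\<forall>z\<in>unit_disc - {0}. f z \<noteq> 0"
    and q: "q has_fps_expansion Q" and eq: "\<forall>z\<in>unit_disc. zf'_over_f f z = q z"
  shows "fps_X * fps_deriv (fps_expansion f 0) = fps_expansion f 0 * Q"
proof -
  have fF: "f has_fps_expansion fps_expansion f 0"
    using f(1) by (simp add: classA_def holomorphic_on_unit_disc_has_fps_expansion)
  have "z * deriv f z = f z * q z" if "z \<in> unit_disc" for z
  proof (cases "z = 0")
    case True
    then show ?thesis
      using f(1) by (simp add: classA_def)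
  next
    case False
    then have "f z \<noteq> 0"
      using f(2) that by simp
    moreover have "z * deriv f z / f z = q z"
      using eq[rule_format, OF that] False by (simp add: zf'_over_f_def)
    ultimately show ?thesis
      by (simp add: field_simps)
  qed
  moreover have "(\<lambda>z. z * deriv f z) has_fps_expansion fps_X * fps_deriv (fps_expansion f 0)"
    by (intro fps_expansion_intros fF)
  ultimately have "(\<lambda>z. f z * q z) has_fps_expansion fps_X * fps_deriv (fps_expansion f 0)"
    by (rule has_fps_expansion_cong_unit_disc[rotated])
  moreover have "(\<lambda>z. f z * q z) has_fps_expansion fps_expansion f 0 * Q"
    by (intro fps_expansion_intros fF q)
  ultimately show ?thesis
    by (rule fps_expansion_unique_complex)
qed

lemma hankel_eq_schwarz_coeffs:
  assumes f: "classA f" "\<forall>z\<in>unit_disc - {0}. f z \<noteq> 0"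
    and w: "schwarz_function w" and eq: "\<forall>z\<in>unit_disc. zf'_over_f f z = xi (w z)"
  shows "coeff f 2 * coeff f 4 - (coeff f 3)^2 =
     coeff w 1 * coeff w 3 / 3 + (coeff w 1)^2 * coeff w 2 / 6
     - (coeff w 1)^4 / 18 - (coeff w 2)^2 / 4"
proof -
  define F W where "F = fps_expansion f 0" and "W = fps_expansion w 0"
  have fF: "f has_fps_expansion F" and wW: "w has_fps_expansion W"
    using f w holomorphic_on_unit_disc_has_fps_expansion
    by (simp_all add: F_def W_def classA_def schwarz_function_def)
  have cf: "coeff f n = fps_nth F n" and cw: "coeff w n = fps_nth W n" for n
    by (rule coeff_eq_fps_nth, fact)+
  have W0: "fps_nth W 0 = 0"
    using cw[of 0] w by (simp add: coeff_def schwarz_function_def)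
  define P where "P = fps_compose fps_xi W"
  have "(xi \<circ> w) has_fps_expansion P"
    unfolding P_def by (rule has_fps_expansion_compose[OF xi_has_fps_expansion wW W0])
  moreover have "\<forall>z\<in>unit_disc. zf'_over_f f z = (xi \<circ> w) z"
    using eq by simp
  ultimately have E: "fps_X * fps_deriv F = F * P"
    unfolding F_def by (rule zf'_over_f_fps_equation[OF f])
  define c1 c2 c3 where "c1 = coeff w 1" and "c2 = coeff w 2" and "c3 = coeff w 3"
  have P: "fps_nth P 0 = 1" "fps_nth P 1 = c1" "fps_nth P 2 = c2 + c1^2"
    "fps_nth P 3 = c3 + 2 * c1 * c2 + 5/6 * c1^3"
    using fps_compose_nth_1_2_3[OF W0, of fps_xi] fps_xi_nth
    by (simp_all add: P_def c1_def c2_def c3_def cw)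
  have "fps_nth F 0 = 0" "fps_nth F 1 = 1"
    using cf[of 0] cf[of 1] f(1) by (simp_all add: classA_def coeff_1 coeff_def)
  note F = fps_coeffs_of_X_deriv_eq_mult[OF E this P(1)]
  have "coeff f 2 * coeff f 4 - (coeff f 3)^2 =
      c1 * ((c1^3 + 3 * c1 * (c2 + c1^2) + 2 * (c3 + 2 * c1 * c2 + 5/6 * c1^3)) / 6)
      - ((c1^2 + (c2 + c1^2)) / 2)^2"
    unfolding cf F P ..
  also have "\<dots> = c1 * c3 / 3 + c1^2 * c2 / 6 - c1^4 / 18 - c2^2 / 4"
    by (simp add: field_simps power2_eq_square power3_eq_cube power4_eq_xxxx)
  finally show ?thesis
    by (simp add: c1_def c2_def c3_def)
qed

lemma convex_quadratic_le_max_endpoints: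
  fixes A B C d s :: real
  assumes "0 \<le> C" "0 \<le> s" "s \<le> d"
  shows "A + B * s + C * s^2 \<le> max A (A + B * d + C * d^2)"
proof -
  have "C * s^2 \<le> C * (d * s)"
    using assms by (simp add: power2_eq_square mult_left_mono mult_right_mono)
  then have "A + B * s + C * s^2 \<le> A + (B + C * d) * s"
    by (simp add: algebra_simps)
  also have "\<dots> \<le> max A (A + (B + C * d) * d)"
  proof (cases "0 \<le> B + C * d")
    case True
    then show ?thesis
      using assms by (simp add: mult_left_mono)
  next
    case False
    then show ?thesis
      using assms by (simp add: mult_nonpos_nonneg)
  qed
  finally show ?thesis
    by (simp add: algebra_simps power2_eq_square)
qed

lemma hankel_majorant_le:
  fixes r s :: real
  assumes r: "0 \<le> r" "r \<le> 1" and s: "0 \<le> s" "s \<le> 1 - r^2"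
  shows "r * (1 - r^2 - s^2 / (1 + r)) / 3 + r^2 * s / 6 + r^4 / 18 + s^2 / 4 \<le> 1/4"
proof -
  define A where "A = r * (1 - r^2) / 3 + r^4 / 18"
  define C where "C = 1/4 - r / (3 * (1 + r))"
  have "r * (1 - r) \<le> 1/4"
    using sum_squares_ge_zero[of "2 * r - 1" 0] by (simp add: algebra_simps power2_eq_square)
  then have "r * (1 - r) * (1 + r) \<le> 1/4 * 2"
    using r by (intro mult_mono) auto
  then have "r * (1 - r^2) \<le> 1/2"
    by (simp add: algebra_simps power2_eq_square)
  moreover have "r^4 \<le> 1"
    using r by (simp add: power_le_one)
  ultimately have "A \<le> 1/4"
    unfolding A_def by linarith
  have "A + r^2 / 6 * (1 - r^2) + C * (1 - r^2)^2 = 1/4 - 7/36 * r^4"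
    using r by (simp add: A_def C_def field_simps power2_eq_square power4_eq_xxxx)
  moreover have "0 \<le> C"
    using r by (simp add: C_def field_simps)
  ultimately have "A + r^2 / 6 * s + C * s^2 \<le> max A (1/4 - 7/36 * r^4)"
    using convex_quadratic_le_max_endpoints[of C s "1 - r^2" A "r^2 / 6"] s by simp
  also have "\<dots> \<le> 1/4"
    using \<open>A \<le> 1/4\<close> zero_le_power[OF r(1), of 4] by linarith
  finally have "A + r^2 / 6 * s + C * s^2 \<le> 1/4" .
  moreover have "r * (1 - r^2 - s^2 / (1 + r)) / 3 + r^2 * s / 6 + r^4 / 18 + s^2 / 4
      = A + r^2 / 6 * s + C * s^2"
    using r by (simp add: A_def C_def field_simps power2_eq_square)
  ultimately show ?thesis
    by simp
qed

lemma schwarz_function_hankel_functional_le: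
  assumes w: "schwarz_function w"
  shows "norm (coeff w 1 * coeff w 3 / 3 + (coeff w 1)^2 * coeff w 2 / 6
      - (coeff w 1)^4 / 18 - (coeff w 2)^2 / 4) \<le> 1/4"
proof -
  define r s where "r = norm (coeff w 1)" and "s = norm (coeff w 2)"
  have r: "0 \<le> r" "r \<le> 1"
    using schwarz_function_coeff1_le[OF w] by (simp_all add: r_def)
  have "norm (coeff w 1 * coeff w 3 / 3 + (coeff w 1)^2 * coeff w 2 / 6
      - (coeff w 1)^4 / 18 - (coeff w 2)^2 / 4)
    \<le> norm (coeff w 1 * coeff w 3 / 3) + norm ((coeff w 1)^2 * coeff w 2 / 6)
      + norm ((coeff w 1)^4 / 18) + norm ((coeff w 2)^2 / 4)"
    by (smt (verit) norm_triangle_ineq norm_triangle_ineq4)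
  also have "\<dots> = r * norm (coeff w 3) / 3 + r^2 * s / 6 + r^4 / 18 + s^2 / 4"
    by (simp add: norm_mult norm_divide norm_power r_def s_def)
  also have "\<dots> \<le> r * (1 - r^2 - s^2 / (1 + r)) / 3 + r^2 * s / 6 + r^4 / 18 + s^2 / 4"
    using schwarz_function_coeff3_le[OF w] r
    by (simp add: mult_left_mono divide_right_mono r_def s_def)
  also have "\<dots> \<le> 1/4"
    using hankel_majorant_le r schwarz_function_coeff2_le[OF w] by (simp add: r_def s_def)
  finally show ?thesis .
qed

subsection \<open>The extremal function\<close>

lemma exists_classA_zf'_over_f_eq:
  assumes p: "p holomorphic_on unit_disc" "p 0 = 1"
  obtains f where "classA f" "\<forall>z\<in>unit_disc - {0}. f z \<noteq> 0"
    "\<forall>z\<in>unit_disc. zf'_over_f f z = p z"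
proof -
  have "(\<lambda>z. p z - 1) holomorphic_on ball 0 1"
    using p by (auto simp: unit_disc_def intro!: holomorphic_intros)
  then obtain h where h: "h holomorphic_on ball 0 1"
    and ph: "\<And>z. norm z < 1 \<Longrightarrow> p z - 1 = z * h z"
    using Schwarz3[where f="\<lambda>z. p z - 1" and r=1] p(2) by auto
  obtain Q where
    Q_within: "\<And>z. z \<in> ball 0 1 \<Longrightarrow> (Q has_field_derivative h z) (at z within ball 0 1)"
    using holomorphic_convex_primitive'[OF convex_ball open_ball h] by blast
  have Q: "(Q has_field_derivative h z) (at z)" if "z \<in> unit_disc" for z
    using Q_within[of z] that at_within_open[of z "ball 0 1"] by (simp add: unit_disc_def)
  define f where "f z = z * exp (Q z - Q 0)" for z
  have f': "(f has_field_derivative exp (Q z - Q 0) * p z) (at z)" if "z \<in> unit_disc" for z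
  proof -
    have "(f has_field_derivative exp (Q z - Q 0) * (1 + z * h z)) (at z)"
      unfolding f_def by (rule derivative_eq_intros Q[OF that] refl | simp add: algebra_simps)+
    then show ?thesis
      using ph[of z] that by (simp add: unit_disc_def algebra_simps)
  qed
  have "f holomorphic_on unit_disc"
    unfolding unit_disc_def holomorphic_on_open[OF open_ball]
    using f'[unfolded unit_disc_def] by blast
  then have "classA f"
    using DERIV_imp_deriv[OF f'[of 0]] p(2) by (simp add: classA_def f_def unit_disc_def)
  moreover have "\<forall>z\<in>unit_disc. zf'_over_f f z = p z"
    using DERIV_imp_deriv[OF f'] p(2) by (simp add: zf'_over_f_def f_def)
  ultimately show ?thesis
    using that by (simp add: f_def)
qed

lemma schwarz_function_square: "schwarz_function (\<lambda>z. z^2)"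
  by (auto simp: schwarz_function_def unit_disc_def norm_power power_less_one_iff abs_square_less_1
      intro!: holomorphic_intros)

lemma coeff_square: "coeff (\<lambda>z. z^2) n = (if n = 2 then 1 else 0)"
proof -
  have "(\<lambda>z::complex. z^2) has_fps_expansion fps_X^2"
    by (intro fps_expansion_intros)
  then show ?thesis
    by (simp add: coeff_eq_fps_nth fps_X_power_iff)
qed

lemma xi_square_holomorphic: "(\<lambda>z. xi (z^2)) holomorphic_on unit_disc"
proof -
  have "1 - z^2 \<noteq> 0" if "z \<in> unit_disc" for z :: complex
  proof
    assume "1 - z^2 = 0"
    then have "norm z ^ 2 = 1"
      by (metis norm_one norm_power right_minus_eq)
    moreover have "norm z ^ 2 < 1"
      using that by (simp add: unit_disc_def abs_square_less_1)
    ultimately show False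
      by simp
  qed
  then show ?thesis
    unfolding xi_def by (intro holomorphic_intros) auto
qed

theorem theorem3p5:
  shows "(\<forall>f\<in>S_xi. cmod (coeff f 2 * coeff f 4 - (coeff f 3)^2) \<le> 1/4)
       \<and> (\<exists>f\<in>S_xi. cmod (coeff f 2 * coeff f 4 - (coeff f 3)^2) = 1/4)"
proof
  show "\<forall>f\<in>S_xi. cmod (coeff f 2 * coeff f 4 - (coeff f 3)^2) \<le> 1/4"
  proof
    fix f assume "f \<in> S_xi"
    then obtain w where "classA f" "\<forall>z\<in>unit_disc - {0}. f z \<noteq> 0" "schwarz_function w"
      "\<forall>z\<in>unit_disc. zf'_over_f f z = xi (w z)"
      by (auto simp: S_xi_def subordinate_iff_schwarz_function)
    then show "cmod (coeff f 2 * coeff f 4 - (coeff f 3)^2) \<le> 1/4"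
      using hankel_eq_schwarz_coeffs schwarz_function_hankel_functional_le by simp
  qed
next
  obtain f where f: "classA f" "\<forall>z\<in>unit_disc - {0}. f z \<noteq> 0"
    and eq: "\<forall>z\<in>unit_disc. zf'_over_f f z = xi (z^2)"
    by (rule exists_classA_zf'_over_f_eq[OF xi_square_holomorphic]) (simp add: xi_def)
  then have "f \<in> S_xi"
    using schwarz_function_square by (auto simp: S_xi_def subordinate_iff_schwarz_function)
  moreover have "coeff f 2 * coeff f 4 - (coeff f 3)^2 = -1/4"
    using hankel_eq_schwarz_coeffs[OF f schwarz_function_square eq] by (simp add: coeff_square)
  ultimately show "\<exists>f\<in>S_xi. cmod (coeff f 2 * coeff f 4 - (coeff f 3)^2) = 1/4"
    by force
qed

end
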